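(* There exists a semifilter $\mathcal{S}$ that is homeomorphic to $\mathbf{S}$, where $\mathbf{S}$ is the (unique up to homeomorphism) zero-dimensional space that is the union of a completely metrizable subspace and a $\sigma$-compact subspace, is nowhere $\sigma$-compact, and is nowhere the union of a completely metrizable subspace and a countable subspace.
   Context: All spaces are separable metrizable. For a topological property $\mathcal{P}$, a space $X$ is nowhere $\mathcal{P}$ if $X$ is non-empty and no non-empty open subspace of $X$ has $\mathcal{P}$. It is known (van Mill) that a zero-dimensional space with the three listed properties is unique up to homeomorphism; this space is denoted $\mathbf{S}$. A semifilter (on $\omega$) is a collection $\mathcal{S}\subseteq\mathcal{P}(\omega)$ such that $\varnothing\notin\mathcal{S}$, $\omega\in\mathcal{S}$, $\mathcal{S}$ is closed under finite modifications, and $\mathcal{S}$ is upward-closed; it is viewed as a subspace of $2^\omega$ via characteristic functions. *)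

theory Defs
  imports "HOL-Analysis.Analysis"
begin

definition cantor_space :: "(nat \<Rightarrow> bool) topology" where
  "cantor_space = product_topology (\<lambda>_. discrete_topology (UNIV :: bool set)) (UNIV :: nat set)"

definition char_fun :: "nat set \<Rightarrow> (nat \<Rightarrow> bool)" where
  "char_fun A = (\<lambda>n. n \<in> A)"

definition semifilter :: "nat set set \<Rightarrow> bool" where
  "semifilter S \<longleftrightarrow>
     {} \<notin> S \<and> UNIV \<in> S \<and>
     (\<forall>A B. A \<in> S \<and> finite ((A - B) \<union> (B - A)) \<longrightarrow> B \<in> S) \<and>
     (\<forall>A B. A \<in> S \<and> A \<subseteq> B \<longrightarrow> B \<in> S)"

definition semifilter_space :: "nat set set \<Rightarrow> (nat \<Rightarrow> bool) topology" where
  "semifilter_space S = subtopology cantor_space (char_fun ` S)"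

definition sigma_compact_space :: "'a topology \<Rightarrow> bool" where
  "sigma_compact_space X \<longleftrightarrow>
     (\<exists>F. countable F \<and> (\<forall>K\<in>F. compactin X K) \<and> \<Union>F = topspace X)"

definition cm_plus_sigma_compact :: "'a topology \<Rightarrow> bool" where
  "cm_plus_sigma_compact X \<longleftrightarrow>
     (\<exists>A B. A \<union> B = topspace X \<and> completely_metrizable_space (subtopology X A)
            \<and> sigma_compact_space (subtopology X B))"

definition cm_plus_countable :: "'a topology \<Rightarrow> bool" where
  "cm_plus_countable X \<longleftrightarrow>
     (\<exists>A B. A \<union> B = topspace X \<and> completely_metrizable_space (subtopology X A)
            \<and> countable B)"

definition nowhere :: "('a topology \<Rightarrow> bool) \<Rightarrow> 'a topology \<Rightarrow> bool" where
  "nowhere P X \<longleftrightarrow> topspace X \<noteq> {} \<and>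
     (\<forall>U. openin X U \<and> U \<noteq> {} \<longrightarrow> \<not> P (subtopology X U))"

end

theory Submission
  imports Defs
begin

text \<open>
  The witness is the semifilter of all A \<subseteq> \<omega> that meet 3\<omega> in an infinite set or almost
  contain 3\<omega>+1 or 3\<omega>+2. Its points split into a G\<delta> part (infinitely many 1s on 3\<omega>),
  which is completely metrizable, and a \<sigma>-compact part (eventually 1 on 3\<omega>+1 or on 3\<omega>+2).

  Inside a basic open set, the points vanishing off 3\<omega> but with infinitely many 1s on 3\<omega> form
  a Polish subspace whose relatively open sets all have finite sets in their closure. Finite sets
  are never in a semifilter, so compact subsets of the semifilter are nowhere dense in that
  subspace, and the Baire category theorem rules out \<sigma>-compactness.

  Dually, the points of the basic open set vanishing on 3\<omega> form a closed set Z that meets the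
  semifilter only in its \<sigma>-compact part, i.e. in countably many closed sets "eventually 1 on
  3\<omega>+k". If the open set were G \<union> C with G a G\<delta> and C countable, Baire category in the
  Polish space Z \<inter> G would put a nonempty relatively open piece of Z \<inter> G inside one of these
  closed sets; but every open piece of Z contains uncountably many points of the semifilter
  outside that closed set, and one of them avoids C and so lies in G.
\<close>

section \<open>Two Baire category criteria\<close>

lemma Baire_category_closed_cover:
  assumes "completely_metrizable_space X" "topspace X \<noteq> {}" "countable \<F>"
    and "\<And>F. F \<in> \<F> \<Longrightarrow> closedin X F" and "topspace X \<subseteq> \<Union>\<F>"
  obtains F where "F \<in> \<F>" "X interior_of F \<noteq> {}"
proof -
  have "\<Union>\<F> = topspace X"
    using assms(4,5) closedin_subset by blast
  then have "X interior_of \<Union>\<F> \<noteq> {}"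
    using assms(2) by simp
  then show thesis
    using Baire_category_alt[of X \<F>] assms(1,3,4) that by blast
qed

lemma sigma_compact_space_subtopology_Union:
  assumes "compact_space X" "countable \<K>" "\<And>K. K \<in> \<K> \<Longrightarrow> closedin X K"
  shows "sigma_compact_space (subtopology X (\<Union>\<K>))"
  unfolding sigma_compact_space_def
proof (intro exI conjI ballI)
  show "countable \<K>"
    by (fact assms(2))
  show "compactin (subtopology X (\<Union>\<K>)) K" if "K \<in> \<K>" for K
  proof -
    have "compactin X K"
      using closedin_compact_space[OF assms(1) assms(3)[OF that]] .
    moreover have "K \<subseteq> \<Union>\<K>"
      using that by blast
    ultimately show ?thesis
      by (simp add: compactin_subtopology)
  qed
  have "\<Union>\<K> \<subseteq> topspace X"
    using assms(3) closedin_subset by blast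
  then show "\<Union>\<K> = topspace (subtopology X (\<Union>\<K>))"
    by (simp add: Int_absorb1)
qed

lemma not_sigma_compact_space_subtopology:
  assumes Y: "Hausdorff_space Y" and S: "S \<subseteq> topspace Y" and "P \<subseteq> S" "P \<noteq> {}"
    and P: "completely_metrizable_space (subtopology Y P)"
    and escape: "\<And>W. openin (subtopology Y P) W \<Longrightarrow> W \<noteq> {} \<Longrightarrow> \<not> Y closure_of W \<subseteq> S"
  shows "\<not> sigma_compact_space (subtopology Y S)"
proof
  assume "sigma_compact_space (subtopology Y S)"
  then obtain \<K> where \<K>: "countable \<K>" "\<And>K. K \<in> \<K> \<Longrightarrow> compactin (subtopology Y S) K"
    and cover: "\<Union>\<K> = topspace Y \<inter> S"
    unfolding sigma_compact_space_def by auto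
  have K: "closedin Y K" "K \<subseteq> S" if "K \<in> \<K>" for K
    using \<K>(2)[OF that] compactin_imp_closedin[OF Y] by (auto simp: compactin_subtopology)
  have top: "topspace (subtopology Y P) = P"
    using S \<open>P \<subseteq> S\<close> by auto
  have "P \<subseteq> \<Union> ((\<inter>) P ` \<K>)"
    using cover S \<open>P \<subseteq> S\<close> by blast
  then obtain F where F: "F \<in> (\<inter>) P ` \<K>" "subtopology Y P interior_of F \<noteq> {}"
    using Baire_category_closed_cover[OF P, of "(\<inter>) P ` \<K>"] K(1) \<K>(1) \<open>P \<noteq> {}\<close>
      closedin_subtopology_Int_closed top by (metis countable_image imageE)
  then obtain K where "K \<in> \<K>" and "F = P \<inter> K"
    by blast
  define W where "W = subtopology Y P interior_of F"
  have "W \<subseteq> K"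
    using interior_of_subset[of "subtopology Y P" F] \<open>F = P \<inter> K\<close> by (auto simp: W_def)
  then have "Y closure_of W \<subseteq> K"
    using closure_of_minimal K(1) \<open>K \<in> \<K>\<close> by blast
  then have "Y closure_of W \<subseteq> S"
    using K(2) \<open>K \<in> \<K>\<close> by blast
  then show False
    using escape[of W] F(2) by (simp add: W_def)
qed

lemma not_cm_plus_countable_subtopology:
  assumes Y: "completely_metrizable_space Y" and "U \<subseteq> topspace Y"
    and Z: "closedin Y Z" "Z \<inter> U \<noteq> {}"
    and \<L>: "countable \<L>" "\<And>L. L \<in> \<L> \<Longrightarrow> closedin Y L" "Z \<inter> U \<subseteq> \<Union>\<L>"
    and many: "\<And>V L. openin Y V \<Longrightarrow> V \<inter> Z \<inter> U \<noteq> {} \<Longrightarrow> L \<in> \<L> \<Longrightarrow> uncountable (V \<inter> Z \<inter> U - L)"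
  shows "\<not> cm_plus_countable (subtopology Y U)"
proof
  assume "cm_plus_countable (subtopology Y U)"
  then obtain G C where GC: "G \<union> C = U" "countable C"
    and "completely_metrizable_space (subtopology (subtopology Y U) G)"
    using \<open>U \<subseteq> topspace Y\<close> unfolding cm_plus_countable_def by (auto simp: Int_absorb1)
  then have "completely_metrizable_space (subtopology Y G)"
    by (simp add: subtopology_subtopology Int_absorb1 flip: GC(1))
  then have "gdelta_in Y G"
    using completely_metrizable_space_imp_gdelta_in completely_metrizable_imp_metrizable_space
      Y GC(1) \<open>U \<subseteq> topspace Y\<close> by blast
  define Q where "Q = Z \<inter> G"
  have Q: "completely_metrizable_space (subtopology Y Q)"
    unfolding Q_def using Y Z(1) \<open>gdelta_in Y G\<close>
    by (simp add: completely_metrizable_space_gdelta_in gdelta_in_Int closed_imp_gdelta_in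
        completely_metrizable_imp_metrizable_space)
  have escape: "\<exists>x \<in> V \<inter> Q. x \<notin> L"
    if "openin Y V" "V \<inter> Z \<inter> U \<noteq> {}" "L \<in> \<L>" for V L
  proof -
    have "uncountable (V \<inter> Z \<inter> U - L)"
      using many that by blast
    then obtain x where "x \<in> V \<inter> Z \<inter> U - L" "x \<notin> C"
      using GC(2) countable_subset by (metis subsetI)
    then show ?thesis
      using GC(1) by (auto simp: Q_def)
  qed
  obtain L0 where "L0 \<in> \<L>"
    using Z(2) \<L>(3) by blast
  have "Z \<inter> U \<subseteq> topspace Y"
    using \<open>U \<subseteq> topspace Y\<close> by blast
  then have "Q \<noteq> {}"
    using escape[of "topspace Y" L0] Z(2) \<open>L0 \<in> \<L>\<close> by auto
  have top: "topspace (subtopology Y Q) = Q"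
    using \<open>U \<subseteq> topspace Y\<close> GC(1) by (auto simp: Q_def)
  obtain F where F: "F \<in> (\<inter>) Q ` \<L>" "subtopology Y Q interior_of F \<noteq> {}"
  proof (rule Baire_category_closed_cover[OF Q])
    show "closedin (subtopology Y Q) F" if "F \<in> (\<inter>) Q ` \<L>" for F
      using that \<L>(2) closedin_subtopology_Int_closed by blast
    show "topspace (subtopology Y Q) \<subseteq> \<Union> ((\<inter>) Q ` \<L>)"
      using top \<L>(3) GC(1) by (auto simp: Q_def)
  qed (use top \<open>Q \<noteq> {}\<close> \<L>(1) in auto)
  then obtain L where "L \<in> \<L>" and "F = Q \<inter> L"
    by blast
  define W where "W = subtopology Y Q interior_of F"
  have "openin (subtopology Y Q) W"
    by (simp add: W_def)
  then obtain V where V: "openin Y V" "W = V \<inter> Q"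
    unfolding openin_subtopology by blast
  have "V \<inter> Z \<inter> U \<noteq> {}"
    using F(2) V(2) GC(1) by (auto simp: W_def Q_def)
  then obtain x where "x \<in> V \<inter> Q" "x \<notin> L"
    using escape V(1) \<open>L \<in> \<L>\<close> by blast
  moreover have "V \<inter> Q \<subseteq> L"
    using interior_of_subset[of "subtopology Y Q" F] \<open>F = Q \<inter> L\<close> V(2) by (auto simp: W_def)
  ultimately show False
    by blast
qed

section \<open>Cantor space\<close>

definition cylinder :: "(nat \<Rightarrow> bool) \<Rightarrow> nat \<Rightarrow> (nat \<Rightarrow> bool) set" where
  "cylinder a n = {x. \<forall>i<n. x i = a i}"

lemma topspace_cantor_space [simp]: "topspace cantor_space = UNIV"
  by (simp add: cantor_space_def)

lemma compact_space_cantor_space: "compact_space cantor_space"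
  unfolding cantor_space_def
  by (simp add: compact_space_product_topology compact_space_discrete_topology)

lemma Hausdorff_space_cantor_space: "Hausdorff_space cantor_space"
  unfolding cantor_space_def by (simp add: Hausdorff_space_product_topology)

lemma completely_metrizable_space_cantor_space: "completely_metrizable_space cantor_space"
  unfolding cantor_space_def
  by (simp add: completely_metrizable_space_product_topology
      completely_metrizable_space_discrete_topology)

lemma metrizable_space_cantor_space: "metrizable_space cantor_space"
  by (simp add: completely_metrizable_space_cantor_space completely_metrizable_imp_metrizable_space)

lemma continuous_map_cantor_space_coordinate:
  "continuous_map cantor_space (discrete_topology UNIV) (\<lambda>x. x i)"
  unfolding cantor_space_def by (rule continuous_map_product_projection) simp

lemma openin_cantor_space_coordinate: "openin cantor_space {x. x i = v}"
  using openin_continuous_map_preimage[OF continuous_map_cantor_space_coordinate, of "{v}" i]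
  by (simp add: vimage_def)

lemma closedin_cantor_space_coordinate: "closedin cantor_space {x. x i = v}"
  using closedin_continuous_map_preimage[OF continuous_map_cantor_space_coordinate, of "{v}" i]
  by (simp add: vimage_def)

lemma closedin_cantor_space_agree: "closedin cantor_space {x. \<forall>i\<in>I. x i = h i}"
proof -
  have "{x. \<forall>i\<in>I. x i = h i} = topspace cantor_space - (\<Union>i\<in>I. {x. x i = (\<not> h i)})"
    by auto
  moreover have "openin cantor_space (\<Union>i\<in>I. {x. x i = (\<not> h i)})"
    by (rule openin_Union) (auto simp: openin_cantor_space_coordinate)
  ultimately show ?thesis
    using closedin_diff[OF closedin_topspace[of cantor_space]] by simp
qed

lemma openin_cantor_space_agree:
  assumes "finite I" shows "openin cantor_space {x. \<forall>i\<in>I. x i = h i}"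
proof -
  have "{x. \<forall>i\<in>I. x i = h i} = topspace cantor_space - (\<Union>i\<in>I. {x. x i = (\<not> h i)})"
    by auto
  moreover have "closedin cantor_space (\<Union>i\<in>I. {x. x i = (\<not> h i)})"
    using assms by (intro closedin_Union) (auto simp: closedin_cantor_space_coordinate)
  ultimately show ?thesis
    using openin_diff[OF openin_topspace[of cantor_space]] by simp
qed

lemma openin_cylinder: "openin cantor_space (cylinder a n)"
  using openin_cantor_space_agree[of "{..<n}" a] by (simp add: cylinder_def lessThan_def)

lemma closedin_cylinder: "closedin cantor_space (cylinder a n)"
  using closedin_cantor_space_agree[of "{..<n}" a] by (simp add: cylinder_def lessThan_def)

lemma centre_in_cylinder [simp]: "a \<in> cylinder a n"
  by (simp add: cylinder_def)

lemma cylinder_antimono: "m \<le> n \<Longrightarrow> cylinder a n \<subseteq> cylinder a m"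
  by (auto simp: cylinder_def)

lemma cylinder_subset_cylinder: "b \<in> cylinder a n \<Longrightarrow> n \<le> m \<Longrightarrow> cylinder b m \<subseteq> cylinder a n"
  by (auto simp: cylinder_def)

lemma openin_cantor_space_contains_cylinder:
  assumes "openin cantor_space V" "a \<in> V"
  obtains n where "cylinder a n \<subseteq> V"
proof -
  obtain U where U: "finite {i \<in> UNIV. U i \<noteq> topspace (discrete_topology (UNIV :: bool set))}"
    "a \<in> Pi\<^sub>E UNIV U" "Pi\<^sub>E UNIV U \<subseteq> V"
    using assms unfolding cantor_space_def openin_product_topology_alt by blast
  have "finite {i. U i \<noteq> UNIV}"
    using U(1) by simp
  then obtain n where n: "\<And>i. U i \<noteq> UNIV \<Longrightarrow> i < n"
    by (auto simp: finite_nat_set_iff_bounded)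
  have "cylinder a n \<subseteq> Pi\<^sub>E UNIV U"
  proof
    fix x assume x: "x \<in> cylinder a n"
    have "x i \<in> U i" for i
    proof (cases "i < n")
      case True
      then have "x i = a i"
        using x by (simp add: cylinder_def)
      then show ?thesis
        using U(2) by auto
    next
      case False
      then show ?thesis
        using n by auto
    qed
    then show "x \<in> Pi\<^sub>E UNIV U"
      by (simp add: PiE_def Pi_def)
  qed
  then show thesis
    using that U(3) by blast
qed

lemma in_closure_of_cantor_spaceI:
  assumes "\<And>m. S \<inter> cylinder c m \<noteq> {}"
  shows "c \<in> cantor_space closure_of S"
  unfolding in_closure_of
proof (intro conjI allI impI)
  fix T assume "c \<in> T \<and> openin cantor_space T"
  then obtain m where "cylinder c m \<subseteq> T"
    using openin_cantor_space_contains_cylinder by blast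
  then show "\<exists>y. y \<in> S \<and> y \<in> T"
    using assms[of m] by blast
qed simp

lemma cantor_space_dim_le_0: "cantor_space dim_le 0"
  unfolding dimension_le_0_neighbourhood_base_of_clopen neighbourhood_base_of
proof (intro allI impI)
  fix W x assume "openin cantor_space W \<and> x \<in> W"
  then obtain n where "cylinder x n \<subseteq> W"
    using openin_cantor_space_contains_cylinder by blast
  then show "\<exists>U V. openin cantor_space U \<and> (closedin cantor_space V \<and> openin cantor_space V) \<and>
      x \<in> U \<and> U \<subseteq> V \<and> V \<subseteq> W"
    using openin_cylinder[of x n] closedin_cylinder[of x n] centre_in_cylinder[of x n] by blast
qed

lemma uncountable_UNIV_nat_bool: "uncountable (UNIV :: (nat \<Rightarrow> bool) set)"
proof
  assume "countable (UNIV :: (nat \<Rightarrow> bool) set)"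
  then obtain f :: "nat \<Rightarrow> nat \<Rightarrow> bool" where "surj f"
    using uncountable_def by blast
  then obtain k where "(\<lambda>n. \<not> f n n) = f k"
    by (metis surjD)
  from fun_cong[OF this, of k] show False
    by simp
qed

lemma uncountable_free_on:
  assumes "infinite J"
  shows "uncountable {x :: nat \<Rightarrow> bool. \<forall>i. i \<notin> J \<longrightarrow> x i = h i}"
proof
  assume countable: "countable {x :: nat \<Rightarrow> bool. \<forall>i. i \<notin> J \<longrightarrow> x i = h i}"
  obtain r :: "nat \<Rightarrow> nat" where r: "inj r" "range r \<subseteq> J"
    using assms infinite_countable_subset by blast
  define e where "e y = (\<lambda>i. if i \<in> range r then y (inv r i) else h i)" for y :: "nat \<Rightarrow> bool"
  have "inj e"
  proof
    fix y z assume "e y = e z"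
    then have "e y (r k) = e z (r k)" for k
      by simp
    then show "y = z"
      using r(1) by (simp add: e_def fun_eq_iff)
  qed
  moreover have "range e \<subseteq> {x. \<forall>i. i \<notin> J \<longrightarrow> x i = h i}"
    using r(2) by (auto simp: e_def)
  then have "countable (range e)"
    using countable countable_subset by blast
  ultimately show False
    using uncountable_UNIV_nat_bool countable_image_inj_on by blast
qed

definition infinitely_true_on :: "nat set \<Rightarrow> (nat \<Rightarrow> bool) set" where
  "infinitely_true_on I = {x. infinite {i \<in> I. x i}}"

definition cofinitely_true_on :: "nat set \<Rightarrow> (nat \<Rightarrow> bool) set" where
  "cofinitely_true_on I = {x. finite {i \<in> I. \<not> x i}}"

definition constant_beyond :: "nat set \<Rightarrow> bool \<Rightarrow> nat \<Rightarrow> (nat \<Rightarrow> bool) set" where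
  "constant_beyond I v m = {x. \<forall>i\<in>I. m \<le> i \<longrightarrow> x i = v}"

lemma closedin_constant_beyond: "closedin cantor_space (constant_beyond I v m)"
proof -
  have "constant_beyond I v m = {x. \<forall>i\<in>{i \<in> I. m \<le> i}. x i = v}"
    by (auto simp: constant_beyond_def)
  then show ?thesis
    by (simp only: closedin_cantor_space_agree)
qed

lemma constant_beyond_mono: "m0 \<le> m \<Longrightarrow> constant_beyond I v m0 \<subseteq> constant_beyond I v m"
  by (auto simp: constant_beyond_def)

lemma cofinitely_true_on_eq_Union: "cofinitely_true_on I = (\<Union>m. constant_beyond I True m)"
proof -
  have "finite {i \<in> I. \<not> x i} \<longleftrightarrow> (\<exists>m. \<forall>i\<in>I. m \<le> i \<longrightarrow> x i)" for x
  proof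
    assume "finite {i \<in> I. \<not> x i}"
    then obtain m where "\<forall>i\<in>{i \<in> I. \<not> x i}. i < m"
      using finite_nat_set_iff_bounded by blast
    then show "\<exists>m. \<forall>i\<in>I. m \<le> i \<longrightarrow> x i"
      using leD by blast
  next
    assume "\<exists>m. \<forall>i\<in>I. m \<le> i \<longrightarrow> x i"
    then obtain m where "{i \<in> I. \<not> x i} \<subseteq> {..<m}"
      by (auto simp: not_less[symmetric])
    then show "finite {i \<in> I. \<not> x i}"
      using finite_subset by blast
  qed
  then show ?thesis
    by (auto simp: cofinitely_true_on_def constant_beyond_def)
qed

lemma constant_beyond_True_subset_cofinitely_true_on:
  "constant_beyond I True m \<subseteq> cofinitely_true_on I"
  unfolding cofinitely_true_on_eq_Union by blast

lemma constant_beyond_False_Int_infinitely_true_on: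
  "constant_beyond I False m \<inter> infinitely_true_on I = {}"
proof -
  have "{i \<in> I. x i} \<subseteq> {..<m}" if "x \<in> constant_beyond I False m" for x
    using that by (auto simp: constant_beyond_def not_le[symmetric])
  then show ?thesis
    unfolding infinitely_true_on_def using finite_subset by blast
qed

lemma gdelta_in_infinitely_true_on: "gdelta_in cantor_space (infinitely_true_on I)"
proof -
  have "infinitely_true_on I = (\<Inter>m. \<Union>i\<in>{i \<in> I. m \<le> i}. {x. x i = True})"
    by (auto simp: infinitely_true_on_def infinite_nat_iff_unbounded_le)
  moreover have "openin cantor_space (\<Union>i\<in>{i \<in> I. m \<le> i}. {x. x i = True})" for m
    by (rule openin_Union) (auto intro: openin_cantor_space_coordinate[of _ True, simplified])
  ultimately show ?thesis
    by (simp only:) (rule gdelta_in_Inter, auto intro: open_imp_gdelta_in)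
qed

lemma patch_in_infinitely_true_on:
  assumes "infinite {i. P i}"
  shows "(\<lambda>i. if i < N then x i else P i) \<in> infinitely_true_on {i. P i}"
proof -
  have "{i. P i} - {..<N} \<subseteq> {i \<in> {i. P i}. if i < N then x i else P i}"
    by auto
  moreover have "infinite ({i. P i} - {..<N})"
    using assms by (simp add: Diff_infinite_finite)
  ultimately show ?thesis
    unfolding infinitely_true_on_def by (simp add: infinite_super)
qed

section \<open>Semifilters as subspaces of Cantor space\<close>

lemma mem_char_fun_image: "x \<in> char_fun ` S \<longleftrightarrow> {n. x n} \<in> S"
proof -
  have "x = char_fun {n. x n}"
    by (simp add: char_fun_def)
  moreover have "inj char_fun"
    by (rule injI) (simp add: char_fun_def fun_eq_iff set_eq_iff)
  ultimately show ?thesis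
    by (metis imageE imageI injD)
qed

lemma semifilter_infinite:
  assumes "semifilter S" "A \<in> S" shows "infinite A"
  using assms unfolding semifilter_def by (metis Diff_empty Un_empty_right empty_Diff)

lemma topspace_semifilter_space [simp]: "topspace (semifilter_space S) = char_fun ` S"
  by (simp add: semifilter_space_def)

lemma topspace_semifilter_space_nonempty:
  assumes "semifilter S" shows "topspace (semifilter_space S) \<noteq> {}"
proof -
  have "UNIV \<in> S"
    using assms by (simp add: semifilter_def)
  then show ?thesis
    by auto
qed

lemma subtopology_semifilter_space:
  "A \<subseteq> char_fun ` S \<Longrightarrow> subtopology (semifilter_space S) A = subtopology cantor_space A"
  by (simp add: semifilter_space_def subtopology_subtopology Int_absorb1)

lemma semifilter_space_dim_le_0: "semifilter_space S dim_le 0"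
  unfolding semifilter_space_def by (rule dimension_le_subtopology[OF cantor_space_dim_le_0])

lemma openin_semifilter_space_contains_cylinder:
  assumes "openin (semifilter_space S) U" "a \<in> U"
  obtains n where "cylinder a n \<inter> char_fun ` S \<subseteq> U"
proof -
  obtain V where V: "openin cantor_space V" "U = V \<inter> char_fun ` S"
    using assms(1) unfolding semifilter_space_def openin_subtopology by blast
  then obtain n where "cylinder a n \<subseteq> V"
    using assms(2) openin_cantor_space_contains_cylinder by blast
  with V(2) show thesis
    using that by blast
qed

section \<open>A semifilter with the required properties\<close>

lemma infinite_residue_class:
  assumes "k < d" shows "infinite {i :: nat. i mod d = k}"
  unfolding infinite_nat_iff_unbounded_le
proof
  fix j
  have "j \<le> d * j + k"
    using assms by (cases d) auto
  moreover have "(d * j + k) mod d = k"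
    using assms by simp
  ultimately
  show "\<exists>i\<ge>j. i \<in> {i. i mod d = k}"
    by blast
qed

definition mod3_semifilter :: "nat set set" where
  "mod3_semifilter = {A. infinite (A \<inter> {n. n mod 3 = 0}) \<or>
     finite ({n. n mod 3 = 1} - A) \<or> finite ({n. n mod 3 = 2} - A)}"

lemma semifilter_mod3_semifilter: "semifilter mod3_semifilter"
  unfolding semifilter_def
proof (intro conjI allI impI)
  show "{} \<notin> mod3_semifilter"
    using infinite_residue_class[of 1 3] infinite_residue_class[of 2 3]
    by (simp add: mod3_semifilter_def)
  show "UNIV \<in> mod3_semifilter"
    by (simp add: mod3_semifilter_def)
next
  fix A B assume "A \<in> mod3_semifilter \<and> finite (A - B \<union> (B - A))"
  then have A: "A \<in> mod3_semifilter" and "finite (A - B)"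
    by auto
  have "A \<inter> I \<subseteq> (B \<inter> I) \<union> (A - B)" "I - B \<subseteq> (I - A) \<union> (A - B)" for I
    by auto
  then have "infinite (A \<inter> I) \<Longrightarrow> infinite (B \<inter> I)" "finite (I - A) \<Longrightarrow> finite (I - B)" for I
    using \<open>finite (A - B)\<close> by (meson finite_UnI finite_subset)+
  with A show "B \<in> mod3_semifilter"
    unfolding mod3_semifilter_def by blast
next
  fix A B assume "A \<in> mod3_semifilter \<and> A \<subseteq> B"
  then have A: "A \<in> mod3_semifilter" and "A \<subseteq> B"
    by auto
  then have "infinite (A \<inter> I) \<Longrightarrow> infinite (B \<inter> I)" "finite (I - A) \<Longrightarrow> finite (I - B)" for I
    by (meson Diff_mono Int_mono finite_subset order_refl)+
  with A show "B \<in> mod3_semifilter"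
    unfolding mod3_semifilter_def by blast
qed

lemma char_fun_image_mod3_semifilter:
  "char_fun ` mod3_semifilter = infinitely_true_on {n. n mod 3 = 0} \<union>
     (cofinitely_true_on {n. n mod 3 = 1} \<union> cofinitely_true_on {n. n mod 3 = 2})"
proof (rule set_eqI)
  fix x :: "nat \<Rightarrow> bool"
  have "{n. x n} \<inter> I = {i \<in> I. x i}" "I - {n. x n} = {i \<in> I. \<not> x i}" for I
    by auto
  then show "x \<in> char_fun ` mod3_semifilter \<longleftrightarrow> x \<in> infinitely_true_on {n. n mod 3 = 0} \<union>
     (cofinitely_true_on {n. n mod 3 = 1} \<union> cofinitely_true_on {n. n mod 3 = 2})"
    by (simp add: mem_char_fun_image mod3_semifilter_def infinitely_true_on_def
        cofinitely_true_on_def)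
qed

lemma cm_plus_sigma_compact_mod3_semifilter:
  "cm_plus_sigma_compact (semifilter_space mod3_semifilter)"
  unfolding cm_plus_sigma_compact_def
proof (intro exI conjI)
  define A where "A = infinitely_true_on {n. n mod 3 = 0}"
  define \<K> where "\<K> = range (constant_beyond {n. n mod 3 = 1} True) \<union>
    range (constant_beyond {n. n mod 3 = 2} True)"
  have B: "\<Union>\<K> = cofinitely_true_on {n. n mod 3 = 1} \<union> cofinitely_true_on {n. n mod 3 = 2}"
    by (auto simp: \<K>_def cofinitely_true_on_eq_Union)
  show "A \<union> \<Union>\<K> = topspace (semifilter_space mod3_semifilter)"
    by (simp add: A_def B char_fun_image_mod3_semifilter)
  then have "A \<subseteq> char_fun ` mod3_semifilter" "\<Union>\<K> \<subseteq> char_fun ` mod3_semifilter"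
    by auto
  moreover have "countable \<K>" "\<And>K. K \<in> \<K> \<Longrightarrow> closedin cantor_space K"
    by (auto simp: \<K>_def closedin_constant_beyond)
  ultimately show "completely_metrizable_space (subtopology (semifilter_space mod3_semifilter) A)"
    and "sigma_compact_space (subtopology (semifilter_space mod3_semifilter) (\<Union>\<K>))"
    by (simp_all only: subtopology_semifilter_space A_def completely_metrizable_space_gdelta_in
        completely_metrizable_space_cantor_space gdelta_in_infinitely_true_on
        sigma_compact_space_subtopology_Union compact_space_cantor_space)
qed

definition supported_in_3N :: "(nat \<Rightarrow> bool) \<Rightarrow> nat \<Rightarrow> (nat \<Rightarrow> bool) set" where
  "supported_in_3N a n = cylinder a n \<inter> constant_beyond {i. i mod 3 \<noteq> 0} False n \<inter>
     infinitely_true_on {i. i mod 3 = 0}"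

lemma supported_in_3N_subset: "supported_in_3N a n \<subseteq> cylinder a n \<inter> char_fun ` mod3_semifilter"
  by (auto simp: supported_in_3N_def char_fun_image_mod3_semifilter)

lemma supported_in_3N_nonempty: "supported_in_3N a n \<noteq> {}"
proof -
  define d where "d = (\<lambda>i. if i < n then a i else i mod 3 = 0)"
  have "d \<in> cylinder a n" "d \<in> constant_beyond {i. i mod 3 \<noteq> 0} False n"
    by (simp_all add: d_def cylinder_def constant_beyond_def)
  moreover have "d \<in> infinitely_true_on {i. i mod 3 = 0}"
    unfolding d_def by (rule patch_in_infinitely_true_on) (simp add: infinite_residue_class)
  ultimately show ?thesis
    unfolding supported_in_3N_def by blast
qed

lemma completely_metrizable_space_supported_in_3N:
  "completely_metrizable_space (subtopology cantor_space (supported_in_3N a n))"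
proof -
  have "gdelta_in cantor_space (supported_in_3N a n)"
    unfolding supported_in_3N_def
    by (intro gdelta_in_Int closed_imp_gdelta_in metrizable_space_cantor_space closedin_cylinder
        closedin_constant_beyond gdelta_in_infinitely_true_on)
  then show ?thesis
    by (simp add: completely_metrizable_space_cantor_space completely_metrizable_space_gdelta_in)
qed

lemma truncation_in_closure_of_supported_in_3N:
  assumes b: "b \<in> supported_in_3N a n" and "n \<le> m"
  shows "(\<lambda>i. i < m \<and> b i) \<in> cantor_space closure_of (cylinder b m \<inter> supported_in_3N a n)"
proof (rule in_closure_of_cantor_spaceI)
  fix k
  define d where "d = (\<lambda>i. if i < max k m then i < m \<and> b i else i mod 3 = 0)"
  have "d \<in> cylinder b m" "d \<in> cylinder (\<lambda>i. i < m \<and> b i) k"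
    by (auto simp: d_def cylinder_def)
  moreover have "d \<in> cylinder a n"
    using \<open>d \<in> cylinder b m\<close> cylinder_subset_cylinder[of b a n m] b \<open>n \<le> m\<close>
    by (auto simp: supported_in_3N_def)
  moreover have "d \<in> constant_beyond {i. i mod 3 \<noteq> 0} False n"
    using b by (auto simp: d_def constant_beyond_def supported_in_3N_def)
  moreover have "d \<in> infinitely_true_on {i. i mod 3 = 0}"
    unfolding d_def by (rule patch_in_infinitely_true_on) (simp add: infinite_residue_class)
  ultimately show "cylinder b m \<inter> supported_in_3N a n \<inter> cylinder (\<lambda>i. i < m \<and> b i) k \<noteq> {}"
    unfolding supported_in_3N_def by blast
qed

lemma closure_of_openin_supported_in_3N:
  assumes W: "openin (subtopology cantor_space (supported_in_3N a n)) W" "W \<noteq> {}"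
  obtains c where "c \<in> cantor_space closure_of W" "c \<notin> char_fun ` mod3_semifilter"
proof -
  obtain V where V: "openin cantor_space V" "W = V \<inter> supported_in_3N a n"
    using W(1) unfolding openin_subtopology by blast
  obtain b where "b \<in> W"
    using W(2) by blast
  then have "b \<in> V" "b \<in> supported_in_3N a n"
    using V(2) by auto
  obtain m0 where "cylinder b m0 \<subseteq> V"
    using openin_cantor_space_contains_cylinder[OF V(1) \<open>b \<in> V\<close>] by blast
  define m where "m = max m0 n"
  have "cylinder b m \<subseteq> V"
    using \<open>cylinder b m0 \<subseteq> V\<close> cylinder_antimono[of m0 m b] by (simp add: m_def)
  then have "cylinder b m \<inter> supported_in_3N a n \<subseteq> W"
    using V(2) by blast
  moreover have "(\<lambda>i. i < m \<and> b i) \<in> cantor_space closure_of (cylinder b m \<inter> supported_in_3N a n)"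
    using \<open>b \<in> supported_in_3N a n\<close> by (rule truncation_in_closure_of_supported_in_3N) (simp add: m_def)
  ultimately have "(\<lambda>i. i < m \<and> b i) \<in> cantor_space closure_of W"
    using closure_of_mono by blast
  moreover have "finite {i. i < m \<and> b i}"
    by simp
  then have "(\<lambda>i. i < m \<and> b i) \<notin> char_fun ` mod3_semifilter"
    using semifilter_infinite[OF semifilter_mod3_semifilter] unfolding mem_char_fun_image by blast
  ultimately show thesis
    using that by blast
qed

lemma nowhere_sigma_compact_mod3_semifilter:
  "nowhere sigma_compact_space (semifilter_space mod3_semifilter)"
  unfolding nowhere_def
proof (intro conjI allI impI)
  show "topspace (semifilter_space mod3_semifilter) \<noteq> {}"
    by (rule topspace_semifilter_space_nonempty[OF semifilter_mod3_semifilter])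
  fix U assume U: "openin (semifilter_space mod3_semifilter) U \<and> U \<noteq> {}"
  then obtain a where "a \<in> U"
    by blast
  then obtain n where n: "cylinder a n \<inter> char_fun ` mod3_semifilter \<subseteq> U"
    using openin_semifilter_space_contains_cylinder U by meson
  have "U \<subseteq> char_fun ` mod3_semifilter"
    using U openin_subset[of "semifilter_space mod3_semifilter" U] by simp
  have "\<not> sigma_compact_space (subtopology cantor_space U)"
  proof (rule not_sigma_compact_space_subtopology[OF Hausdorff_space_cantor_space _ _
        supported_in_3N_nonempty completely_metrizable_space_supported_in_3N])
    show "supported_in_3N a n \<subseteq> U"
      using supported_in_3N_subset n by blast
    show "\<not> cantor_space closure_of W \<subseteq> U"
      if "openin (subtopology cantor_space (supported_in_3N a n)) W" "W \<noteq> {}" for W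
      using closure_of_openin_supported_in_3N[OF that] \<open>U \<subseteq> _\<close> by blast
  qed simp
  then show "\<not> sigma_compact_space (subtopology (semifilter_space mod3_semifilter) U)"
    by (simp add: subtopology_semifilter_space[OF \<open>U \<subseteq> _\<close>])
qed

definition vanishing_on_3N :: "(nat \<Rightarrow> bool) \<Rightarrow> nat \<Rightarrow> (nat \<Rightarrow> bool) set" where
  "vanishing_on_3N a n = cylinder a n \<inter> constant_beyond {i. i mod 3 = 0} False n"

lemma closedin_vanishing_on_3N: "closedin cantor_space (vanishing_on_3N a n)"
  unfolding vanishing_on_3N_def by (intro closedin_Int closedin_cylinder closedin_constant_beyond)

lemma vanishing_on_3N_Int_nonempty: "vanishing_on_3N a n \<inter> char_fun ` mod3_semifilter \<noteq> {}"
proof -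
  define d where "d = (\<lambda>i. if i < n then a i else i mod 3 = 1)"
  have "d \<in> constant_beyond {i. i mod 3 = 1} True n"
    by (simp add: d_def constant_beyond_def)
  then have "d \<in> char_fun ` mod3_semifilter"
    using constant_beyond_True_subset_cofinitely_true_on
    unfolding char_fun_image_mod3_semifilter by blast
  moreover have "d \<in> vanishing_on_3N a n"
    by (simp add: vanishing_on_3N_def d_def cylinder_def constant_beyond_def)
  ultimately show ?thesis
    by blast
qed

lemma vanishing_on_3N_Int_subset:
  "vanishing_on_3N a n \<inter> char_fun ` mod3_semifilter \<subseteq>
     cofinitely_true_on {i. i mod 3 = 1} \<union> cofinitely_true_on {i. i mod 3 = 2}"
  using constant_beyond_False_Int_infinitely_true_on
  unfolding vanishing_on_3N_def char_fun_image_mod3_semifilter by blast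

lemma uncountable_vanishing_on_3N_avoiding:
  assumes b: "b \<in> vanishing_on_3N a n" and "n \<le> m" and k: "k = 1 \<or> k = 2"
  shows "uncountable (cylinder b m \<inter> vanishing_on_3N a n \<inter> char_fun ` mod3_semifilter -
    constant_beyond {i. i mod 3 = k} True m)" (is "uncountable ?piece")
proof -
  \<comment> \<open>Each x with x = h off J agrees with b below m, is true on residue class 3 - k
    beyond m (so lies in the semifilter), is false at p (so avoids the closed set), and is free
    on the rest of residue class k beyond m.\<close>
  define p where "p = 3 * m + k"
  define h where "h = (\<lambda>i. if i < m then b i else i mod 3 = 3 - k)"
  define J where "J = {i. i mod 3 = k} - insert p {..<m}"
  have "k < 3" "k \<noteq> 0" "3 - k \<noteq> k"
    using k by auto
  then have "infinite J"
    unfolding J_def by (simp add: Diff_infinite_finite infinite_residue_class)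
  then have "uncountable {x. \<forall>i. i \<notin> J \<longrightarrow> x i = h i}"
    by (rule uncountable_free_on)
  moreover have "{x. \<forall>i. i \<notin> J \<longrightarrow> x i = h i} \<subseteq> ?piece"
  proof
    fix x assume "x \<in> {x. \<forall>i. i \<notin> J \<longrightarrow> x i = h i}"
    then have x: "x i = h i" if "i mod 3 \<noteq> k \<or> i < m \<or> i = p" for i
      using that by (auto simp: J_def)
    have "x \<in> cylinder b m"
      using x by (simp add: cylinder_def h_def)
    moreover have "x \<in> cylinder a n"
      using \<open>x \<in> cylinder b m\<close> cylinder_subset_cylinder[of b a n m] b \<open>n \<le> m\<close>
      by (auto simp: vanishing_on_3N_def)
    moreover have "x \<in> constant_beyond {i. i mod 3 = 0} False n"
      using x b \<open>k < 3\<close> \<open>k \<noteq> 0\<close> by (simp add: constant_beyond_def h_def vanishing_on_3N_def)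
    moreover have "x \<in> constant_beyond {i. i mod 3 = 3 - k} True m"
      using x \<open>3 - k \<noteq> k\<close> by (simp add: constant_beyond_def h_def)
    then have "x \<in> cofinitely_true_on {i. i mod 3 = 3 - k}"
      using constant_beyond_True_subset_cofinitely_true_on by blast
    then have "x \<in> char_fun ` mod3_semifilter"
      using k by (auto simp: char_fun_image_mod3_semifilter)
    moreover have "x \<notin> constant_beyond {i. i mod 3 = k} True m"
    proof -
      have "p mod 3 = k" "m \<le> p"
        using \<open>k < 3\<close> by (simp_all add: p_def)
      moreover have "\<not> x p"
        using x[of p] \<open>3 - k \<noteq> k\<close> \<open>p mod 3 = k\<close> \<open>m \<le> p\<close> by (simp add: h_def)
      ultimately show ?thesis
        by (auto simp: constant_beyond_def)
    qed
    ultimately show "x \<in> ?piece"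
      unfolding vanishing_on_3N_def by blast
  qed
  ultimately show ?thesis
    using countable_subset by blast
qed

lemma uncountable_openin_vanishing_on_3N_avoiding:
  assumes "openin cantor_space V" "b \<in> V" "b \<in> vanishing_on_3N a n" "k = 1 \<or> k = 2"
  shows "uncountable (V \<inter> vanishing_on_3N a n \<inter> char_fun ` mod3_semifilter -
    constant_beyond {i. i mod 3 = k} True m0)"
proof -
  obtain m1 where "cylinder b m1 \<subseteq> V"
    using openin_cantor_space_contains_cylinder[OF assms(1,2)] by blast
  define m where "m = max m1 (max m0 n)"
  have "cylinder b m \<subseteq> V"
    using \<open>cylinder b m1 \<subseteq> V\<close> cylinder_antimono[of m1 m b] by (simp add: m_def)
  moreover have "constant_beyond {i. i mod 3 = k} True m0 \<subseteq> constant_beyond {i. i mod 3 = k} True m"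
    by (rule constant_beyond_mono) (simp add: m_def)
  ultimately have sub: "cylinder b m \<inter> vanishing_on_3N a n \<inter> char_fun ` mod3_semifilter -
      constant_beyond {i. i mod 3 = k} True m \<subseteq>
    V \<inter> vanishing_on_3N a n \<inter> char_fun ` mod3_semifilter - constant_beyond {i. i mod 3 = k} True m0"
    by blast
  have "uncountable (cylinder b m \<inter> vanishing_on_3N a n \<inter> char_fun ` mod3_semifilter -
      constant_beyond {i. i mod 3 = k} True m)"
    using uncountable_vanishing_on_3N_avoiding[OF assms(3) _ assms(4), of m] by (simp add: m_def)
  then show ?thesis
    using countable_subset[OF sub] by blast
qed

lemma nowhere_cm_plus_countable_mod3_semifilter:
  "nowhere cm_plus_countable (semifilter_space mod3_semifilter)"
  unfolding nowhere_def
proof (intro conjI allI impI)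
  show "topspace (semifilter_space mod3_semifilter) \<noteq> {}"
    by (rule topspace_semifilter_space_nonempty[OF semifilter_mod3_semifilter])
  fix U assume U: "openin (semifilter_space mod3_semifilter) U \<and> U \<noteq> {}"
  then obtain a where "a \<in> U"
    by blast
  then obtain n where n: "cylinder a n \<inter> char_fun ` mod3_semifilter \<subseteq> U"
    using openin_semifilter_space_contains_cylinder U by meson
  have "U \<subseteq> char_fun ` mod3_semifilter"
    using U openin_subset[of "semifilter_space mod3_semifilter" U] by simp
  then have U_eq: "vanishing_on_3N a n \<inter> U = vanishing_on_3N a n \<inter> char_fun ` mod3_semifilter"
    using n by (auto simp: vanishing_on_3N_def)
  define \<L> where "\<L> = range (constant_beyond {i. i mod 3 = 1} True) \<union>
    range (constant_beyond {i. i mod 3 = 2} True)"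
  have "\<not> cm_plus_countable (subtopology cantor_space U)"
  proof (rule not_cm_plus_countable_subtopology[OF completely_metrizable_space_cantor_space _
        closedin_vanishing_on_3N])
    show "countable \<L>" "\<And>L. L \<in> \<L> \<Longrightarrow> closedin cantor_space L"
      by (auto simp: \<L>_def closedin_constant_beyond)
    show "vanishing_on_3N a n \<inter> U \<noteq> {}"
      unfolding U_eq by (rule vanishing_on_3N_Int_nonempty)
    show "vanishing_on_3N a n \<inter> U \<subseteq> \<Union>\<L>"
      unfolding U_eq using vanishing_on_3N_Int_subset by (simp add: cofinitely_true_on_eq_Union \<L>_def)
    show "uncountable (V \<inter> vanishing_on_3N a n \<inter> U - L)"
      if V: "openin cantor_space V" "V \<inter> vanishing_on_3N a n \<inter> U \<noteq> {}" and "L \<in> \<L>" for V L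
    proof -
      obtain b where "b \<in> V" "b \<in> vanishing_on_3N a n"
        using V(2) by blast
      moreover obtain k m0 where "k = 1 \<or> k = 2" "L = constant_beyond {i. i mod 3 = k} True m0"
        using \<open>L \<in> \<L>\<close> by (auto simp: \<L>_def)
      ultimately show ?thesis
        using uncountable_openin_vanishing_on_3N_avoiding[OF V(1)] U_eq
        by (simp add: Int_assoc)
    qed
  qed simp
  then show "\<not> cm_plus_countable (subtopology (semifilter_space mod3_semifilter) U)"
    by (simp add: subtopology_semifilter_space[OF \<open>U \<subseteq> _\<close>])
qed

theorem proposition5p3:
  shows "\<exists>S. semifilter S \<and>
           semifilter_space S dim_le 0 \<and>
           cm_plus_sigma_compact (semifilter_space S) \<and>
           nowhere sigma_compact_space (semifilter_space S) \<and>
           nowhere cm_plus_countable (semifilter_space S)"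
proof (intro exI conjI)
  show "semifilter mod3_semifilter"
    by (fact semifilter_mod3_semifilter)
  show "semifilter_space mod3_semifilter dim_le 0"
    by (fact semifilter_space_dim_le_0)
  show "cm_plus_sigma_compact (semifilter_space mod3_semifilter)"
    by (fact cm_plus_sigma_compact_mod3_semifilter)
  show "nowhere sigma_compact_space (semifilter_space mod3_semifilter)"
    by (fact nowhere_sigma_compact_mod3_semifilter)
  show "nowhere cm_plus_countable (semifilter_space mod3_semifilter)"
    by (fact nowhere_cm_plus_countable_mod3_semifilter)
qed

end
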